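(* Let $S_X,S_Y$ be finite nonempty action sets, $\lambda\in[0,1)$ and $\varphi:S_X\times S_Y\to\mathbb{R}$ additive. If $\varphi\equiv0$ is $\lambda$-enforceable by $X$, then $\varphi\equiv0$ is $\lambda$-enforceable by $X$ using a two-point reactive strategy, i.e., there exist $\tau_X^+,\tau_X^-\in\Delta(S_X)$, $p_0\in[0,1]$ and $p^*:S_Y\to[0,1]$ such that the strategy playing $p_0\tau_X^++(1-p_0)\tau_X^-$ in round $0$ and $p^*[s_Y]\tau_X^++(1-p^*[s_Y])\tau_X^-$ in round $t+1$ after $Y$ played $s_Y$ in round $t$ is $(\varphi,\lambda)$-autocratic.
   Context: Two players $X,Y$ play a repeated game with finite action sets $S_X,S_Y$; $\Delta(S)$ denotes the probability distributions on $S$. $\varphi$ is additive if $\varphi(s_X,s_Y)=\phi_X(s_X)+\phi_Y(s_Y)$ for some $\phi_X:S_X\to\mathbb{R}$, $\phi_Y:S_Y\to\mathbb{R}$. Histories: $\mathcal{H}=\bigcup_{T\ge0}(S_X\times S_Y)^T$; behavioral strategies are maps $\sigma:\mathcal{H}\to\Delta(S)$; players independently draw actions each round from their strategies evaluated at the history of realized action pairs, with $\mathbb{E}_{\sigma_X,\sigma_Y}$ the expectation over the resulting play. $\sigma_X$ is $(\varphi,\lambda)$-autocratic if for every behavioral strategy $\sigma_Y$ of $Y$, $\mathbb{E}_{\sigma_X,\sigma_Y}[(1-\lambda)\sum_{t\ge0}\lambda^t\varphi(s_X^t,s_Y^t)]=0$; $\varphi\equiv0$ is $\lambda$-enforceable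 by $X$ if such a behavioral strategy exists. *)

theory Defs
  imports "HOL-Probability.Probability_Mass_Function"
begin

text \<open>Action sets are finite types 'a (for X) and 'b (for Y); types are nonempty.
  A history is the list of realized action pairs in chronological order.\<close>

type_synonym ('a, 'b) history = "('a \<times> 'b) list"

definition additive :: "('a \<times> 'b \<Rightarrow> real) \<Rightarrow> bool" where
  "additive \<phi> \<longleftrightarrow> (\<exists>\<phi>X \<phi>Y. \<forall>sX sY. \<phi> (sX, sY) = \<phi>X sX + \<phi>Y sY)"

definition hist_prob ::
  "(('a, 'b) history \<Rightarrow> 'a pmf) \<Rightarrow> (('a, 'b) history \<Rightarrow> 'b pmf) \<Rightarrow> ('a, 'b) history \<Rightarrow> real" where
  "hist_prob \<sigma>X \<sigma>Y h =
     (\<Prod>i<length h. pmf (\<sigma>X (take i h)) (fst (h ! i)) * pmf (\<sigma>Y (take i h)) (snd (h ! i)))"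

definition stage_exp ::
  "(('a::finite, 'b::finite) history \<Rightarrow> 'a pmf) \<Rightarrow> (('a, 'b) history \<Rightarrow> 'b pmf)
     \<Rightarrow> ('a \<times> 'b \<Rightarrow> real) \<Rightarrow> nat \<Rightarrow> real" where
  "stage_exp \<sigma>X \<sigma>Y \<phi> t =
     (\<Sum>h\<in>{h :: ('a, 'b) history. length h = t}.
        hist_prob \<sigma>X \<sigma>Y h * (\<Sum>sX\<in>UNIV. \<Sum>sY\<in>UNIV. pmf (\<sigma>X h) sX * pmf (\<sigma>Y h) sY * \<phi> (sX, sY)))"

text \<open>Expected normalized discounted payoff
  E[(1-lam) * sum_t lam^t phi(s^t)] = (1-lam) * sum_t lam^t E[phi(s^t)] (phi bounded).\<close>
definition disc_payoff ::
  "(('a::finite, 'b::finite) history \<Rightarrow> 'a pmf) \<Rightarrow> (('a, 'b) history \<Rightarrow> 'b pmf)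
     \<Rightarrow> ('a \<times> 'b \<Rightarrow> real) \<Rightarrow> real \<Rightarrow> real" where
  "disc_payoff \<sigma>X \<sigma>Y \<phi> lam = (1 - lam) * (\<Sum>t. lam ^ t * stage_exp \<sigma>X \<sigma>Y \<phi> t)"

definition autocratic ::
  "(('a::finite, 'b::finite) history \<Rightarrow> 'a pmf) \<Rightarrow> ('a \<times> 'b \<Rightarrow> real) \<Rightarrow> real \<Rightarrow> bool" where
  "autocratic \<sigma>X \<phi> lam \<longleftrightarrow> (\<forall>\<sigma>Y :: ('a, 'b) history \<Rightarrow> 'b pmf. disc_payoff \<sigma>X \<sigma>Y \<phi> lam = 0)"

definition enforceable :: "('a::finite \<times> 'b::finite \<Rightarrow> real) \<Rightarrow> real \<Rightarrow> bool" where
  "enforceable \<phi> lam \<longleftrightarrow> (\<exists>\<sigma>X. autocratic \<sigma>X \<phi> lam)"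

definition mix_pmf :: "real \<Rightarrow> 'a pmf \<Rightarrow> 'a pmf \<Rightarrow> 'a pmf" where
  "mix_pmf p tp tm = bind_pmf (bernoulli_pmf p) (\<lambda>c. if c then tp else tm)"

definition two_point_reactive ::
  "'a pmf \<Rightarrow> 'a pmf \<Rightarrow> real \<Rightarrow> ('b \<Rightarrow> real) \<Rightarrow> ('a, 'b) history \<Rightarrow> 'a pmf" where
  "two_point_reactive tp tm p0 pstar h =
     (if h = [] then mix_pmf p0 tp tm else mix_pmf (pstar (snd (last h))) tp tm)"

end

theory Submission
  imports Defs
begin

text \<open>Write \<open>\<phi> (x, y) = \<phi>X x + \<phi>Y y\<close> and let \<open>\<phi>X\<close> attain its minimum \<open>a\<close> at
  \<open>xmin\<close> and its maximum \<open>b\<close> at \<open>xmax\<close>. Let \<open>\<sigma>X\<close> be autocratic and \<open>e0\<close> the expectation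
  of \<open>\<phi>X\<close> under its first move. If \<open>Y\<close> plays a fixed action \<open>y\<close> forever, the first round is
  worth \<open>e0 + \<phi>Y y\<close> and every later round lies in \<open>[a + \<phi>Y y, b + \<phi>Y y]\<close>, so
  \<open>c = -(1 - lam) e0\<close> lies in \<open>[\<phi>Y y + lam a, \<phi>Y y + lam b]\<close> for every \<open>y\<close>. Hence there are
  weights \<open>pstar y\<close> and \<open>p0\<close> in \<open>[0, 1]\<close> with
  \<open>\<phi>Y y + lam (pstar y b + (1 - pstar y) a) = c\<close> and \<open>p0 b + (1 - p0) a = e0\<close>.
  Under the two-point reactive strategy between \<open>xmax\<close> and \<open>xmin\<close> with these weights, the
  expected \<open>\<phi>X\<close> of round \<open>t + 1\<close> is fixed by the action of \<open>Y\<close> in round \<open>t\<close>, so the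
  \<open>\<phi>Y\<close>-payoff of round \<open>t\<close> plus \<open>lam\<close> times the \<open>\<phi>X\<close>-payoff of round \<open>t + 1\<close> is
  always \<open>c\<close>, and the discounted sum telescopes to \<open>(1 - lam) e0 + c = 0\<close>.\<close>

lemma sum_lists_length_Suc:
  fixes F :: "'c::finite list \<Rightarrow> 'r::comm_monoid_add"
  shows "(\<Sum>xs\<in>{xs. length xs = Suc n}. F xs) = (\<Sum>xs\<in>{xs. length xs = n}. \<Sum>z\<in>UNIV. F (xs @ [z]))"
proof -
  let ?snoc = "\<lambda>(xs, z). xs @ [z]"
  have snoc_image: "{xs. length xs = Suc n} = ?snoc ` ({xs. length xs = n} \<times> UNIV)"
    by (auto simp: image_iff length_Suc_conv_rev)
  have "sum F (?snoc ` ({xs. length xs = n} \<times> UNIV)) = sum (F \<circ> ?snoc) ({xs. length xs = n} \<times> UNIV)"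
    by (rule sum.reindex) (auto simp: inj_on_def)
  then show ?thesis
    by (simp only: snoc_image) (simp add: sum.cartesian_product case_prod_unfold)
qed

lemma expectation_finite_type:
  fixes p :: "'a::finite pmf" and f :: "'a \<Rightarrow> real"
  shows "measure_pmf.expectation p f = (\<Sum>x\<in>UNIV. pmf p x * f x)"
  by (subst integral_measure_pmf_real[where A = UNIV]) (auto simp: mult.commute)

lemma expectation_bounds:
  fixes p :: "'a::finite pmf" and f :: "'a \<Rightarrow> real"
  assumes "\<And>x. lo \<le> f x" "\<And>x. f x \<le> hi"
  shows "lo \<le> measure_pmf.expectation p f" "measure_pmf.expectation p f \<le> hi"
  using assms by (auto intro!: measure_pmf.integral_ge_const measure_pmf.integral_le_const
      integrable_measure_pmf_finite)

lemma expectation_add_scaled: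
  fixes p :: "'a::finite pmf" and f g :: "'a \<Rightarrow> real"
  shows "measure_pmf.expectation p (\<lambda>x. f x + k * g x) =
           measure_pmf.expectation p f + k * measure_pmf.expectation p g"
  by (simp add: expectation_finite_type sum.distrib sum_distrib_left algebra_simps)

lemma expectation_mix_pmf:
  fixes tp tm :: "'a::finite pmf" and f :: "'a \<Rightarrow> real"
  assumes "p \<in> {0..1}"
  shows "measure_pmf.expectation (mix_pmf p tp tm) f =
           p * measure_pmf.expectation tp f + (1 - p) * measure_pmf.expectation tm f"
  using assms unfolding mix_pmf_def
  by (subst pmf_expectation_bind[where A = UNIV]) (auto simp: UNIV_bool)

lemma sum_product_pmf_additive:
  fixes p :: "'a::finite pmf" and q :: "'b::finite pmf"
  shows "(\<Sum>x\<in>UNIV. \<Sum>y\<in>UNIV. pmf p x * pmf q y * (f x + g y)) =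
           measure_pmf.expectation p f + measure_pmf.expectation q g"
proof -
  have "(\<Sum>x\<in>UNIV. \<Sum>y\<in>UNIV. pmf p x * pmf q y * (f x + g y)) =
          (\<Sum>x\<in>UNIV. \<Sum>y\<in>UNIV. pmf p x * f x * pmf q y) +
          (\<Sum>y\<in>UNIV. \<Sum>x\<in>UNIV. pmf q y * g y * pmf p x)"
    by (subst sum.swap[of _ _ UNIV]) (simp add: algebra_simps sum.distrib)
  then show ?thesis
    by (simp add: expectation_finite_type sum_pmf_eq_1 sum_distrib_left[symmetric])
qed

definition hist_exp ::
  "(('a::finite, 'b::finite) history \<Rightarrow> 'a pmf) \<Rightarrow> (('a, 'b) history \<Rightarrow> 'b pmf)
     \<Rightarrow> nat \<Rightarrow> (('a, 'b) history \<Rightarrow> real) \<Rightarrow> real" where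
  "hist_exp \<sigma>X \<sigma>Y t g = (\<Sum>h\<in>{h. length h = t}. hist_prob \<sigma>X \<sigma>Y h * g h)"

lemma hist_prob_snoc:
  "hist_prob \<sigma>X \<sigma>Y (h @ [(x, y)]) = hist_prob \<sigma>X \<sigma>Y h * (pmf (\<sigma>X h) x * pmf (\<sigma>Y h) y)"
proof -
  have "(\<Prod>i<length h. pmf (\<sigma>X (take i (h @ [(x, y)]))) (fst ((h @ [(x, y)]) ! i)) *
          pmf (\<sigma>Y (take i (h @ [(x, y)]))) (snd ((h @ [(x, y)]) ! i))) = hist_prob \<sigma>X \<sigma>Y h"
    unfolding hist_prob_def by (rule prod.cong) (auto simp: nth_append)
  then show ?thesis
    unfolding hist_prob_def by (simp add: lessThan_Suc)
qed

lemma hist_exp_0: "hist_exp \<sigma>X \<sigma>Y 0 g = g []"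
  by (simp add: hist_exp_def hist_prob_def)

lemma hist_exp_Suc:
  "hist_exp \<sigma>X \<sigma>Y (Suc t) g =
     hist_exp \<sigma>X \<sigma>Y t (\<lambda>h. \<Sum>x\<in>UNIV. \<Sum>y\<in>UNIV. pmf (\<sigma>X h) x * pmf (\<sigma>Y h) y * g (h @ [(x, y)]))"
proof -
  have "(\<Sum>z\<in>UNIV. F z) = (\<Sum>x\<in>UNIV. \<Sum>y\<in>UNIV. F (x, y))" for F :: "'a \<times> 'b \<Rightarrow> real"
    by (simp add: sum.cartesian_product)
  then show ?thesis
    unfolding hist_exp_def sum_lists_length_Suc
    by (simp add: hist_prob_snoc sum_distrib_left mult.assoc)
qed

lemma hist_exp_cong:
  "(\<And>h. length h = t \<Longrightarrow> f h = g h) \<Longrightarrow> hist_exp \<sigma>X \<sigma>Y t f = hist_exp \<sigma>X \<sigma>Y t g"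
  unfolding hist_exp_def by (rule sum.cong) auto

lemma hist_exp_mono:
  "(\<And>h. length h = t \<Longrightarrow> f h \<le> g h) \<Longrightarrow> hist_exp \<sigma>X \<sigma>Y t f \<le> hist_exp \<sigma>X \<sigma>Y t g"
  unfolding hist_exp_def hist_prob_def by (rule sum_mono) (auto intro!: mult_left_mono prod_nonneg)

lemma hist_exp_add_scaled:
  "hist_exp \<sigma>X \<sigma>Y t (\<lambda>h. f h + k * g h) = hist_exp \<sigma>X \<sigma>Y t f + k * hist_exp \<sigma>X \<sigma>Y t g"
  unfolding hist_exp_def by (simp add: sum.distrib sum_distrib_left algebra_simps)

lemma hist_exp_Suc_snd_last:
  "hist_exp \<sigma>X \<sigma>Y (Suc t) (\<lambda>h. f (snd (last h))) =
     hist_exp \<sigma>X \<sigma>Y t (\<lambda>h. measure_pmf.expectation (\<sigma>Y h) f)"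
  unfolding hist_exp_Suc
  using sum_product_pmf_additive[where f = "\<lambda>_. 0" and g = f] by (intro hist_exp_cong) simp

lemma hist_exp_const: "hist_exp \<sigma>X \<sigma>Y t (\<lambda>_. c) = c"
proof (induction t)
  case 0
  show ?case by (simp add: hist_exp_0)
next
  case (Suc t)
  then show ?case
    using hist_exp_Suc_snd_last[of \<sigma>X \<sigma>Y t "\<lambda>_. c"] by simp
qed

lemma hist_exp_bounds:
  assumes "\<And>h. length h = t \<Longrightarrow> lo \<le> g h \<and> g h \<le> hi"
  shows "lo \<le> hist_exp \<sigma>X \<sigma>Y t g \<and> hist_exp \<sigma>X \<sigma>Y t g \<le> hi"
  using hist_exp_mono[of t "\<lambda>_. lo" g] hist_exp_mono[of t g "\<lambda>_. hi"] assms
  by (auto simp: hist_exp_const)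

lemma stage_exp_additive:
  assumes "\<And>x y. \<phi> (x, y) = \<phi>X x + \<phi>Y y"
  shows "stage_exp \<sigma>X \<sigma>Y \<phi> t =
           hist_exp \<sigma>X \<sigma>Y t (\<lambda>h. measure_pmf.expectation (\<sigma>X h) \<phi>X + measure_pmf.expectation (\<sigma>Y h) \<phi>Y)"
  unfolding stage_exp_def hist_exp_def assms sum_product_pmf_additive ..

lemma summable_discounted:
  fixes u :: "nat \<Rightarrow> real"
  assumes "0 \<le> lam" "lam < 1" "\<And>t. \<bar>u t\<bar> \<le> K"
  shows "summable (\<lambda>t. lam ^ t * u t)"
proof (rule summable_comparison_test')
  show "summable (\<lambda>t. K * lam ^ t)"
    using assms by (intro summable_mult summable_geometric) auto
  show "norm (lam ^ t * u t) \<le> K * lam ^ t" for t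
    using assms mult_right_mono[OF assms(3)[of t], of "lam ^ t"] by (simp add: abs_mult mult.commute)
qed

lemma discounted_const_sums:
  fixes c :: real
  assumes "0 \<le> lam" "lam < 1"
  shows "(\<lambda>t. lam ^ t * c) sums (c / (1 - lam))"
  using sums_mult2[OF geometric_sums, of lam c] assms by simp

lemma discounted_sum_bounds:
  fixes u :: "nat \<Rightarrow> real"
  assumes "0 \<le> lam" "lam < 1" "\<And>t. lo \<le> u t" "\<And>t. u t \<le> hi"
  shows "summable (\<lambda>t. lam ^ t * u t)"
    and "lo \<le> (1 - lam) * (\<Sum>t. lam ^ t * u t)" "(1 - lam) * (\<Sum>t. lam ^ t * u t) \<le> hi"
proof -
  show summable: "summable (\<lambda>t. lam ^ t * u t)"
  proof (rule summable_discounted[where K = "\<bar>lo\<bar> + \<bar>hi\<bar>"])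
    show "\<bar>u t\<bar> \<le> \<bar>lo\<bar> + \<bar>hi\<bar>" for t
      using assms(3,4)[of t] by arith
  qed (use assms in auto)
  note u_sums = summable_sums[OF summable]
  note const_sums = discounted_const_sums[OF assms(1,2)]
  have "lo / (1 - lam) \<le> (\<Sum>t. lam ^ t * u t)" "(\<Sum>t. lam ^ t * u t) \<le> hi / (1 - lam)"
    using assms by (auto intro!: sums_le[OF _ const_sums u_sums] sums_le[OF _ u_sums const_sums]
        mult_left_mono)
  then show "lo \<le> (1 - lam) * (\<Sum>t. lam ^ t * u t)" "(1 - lam) * (\<Sum>t. lam ^ t * u t) \<le> hi"
    using assms by (auto simp: field_simps)
qed

lemma discounted_sum_split_head:
  fixes u :: "nat \<Rightarrow> real"
  assumes "summable (\<lambda>t. lam ^ t * u (Suc t))"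
  shows "(\<Sum>t. lam ^ t * u t) = u 0 + lam * (\<Sum>t. lam ^ t * u (Suc t))"
proof -
  have "summable (\<lambda>t. lam ^ Suc t * u (Suc t))"
    using summable_mult[OF assms, of lam] by (simp add: mult.assoc)
  then have "summable (\<lambda>t. lam ^ t * u t)"
    by (rule summable_Suc_iff[THEN iffD1])
  from suminf_split_head[OF this] show ?thesis
    using suminf_mult[OF assms, of lam] by (simp add: mult.assoc)
qed

lemma discounted_sum_telescope:
  fixes X A :: "nat \<Rightarrow> real"
  assumes "0 \<le> lam" "lam < 1" "\<And>t. \<bar>X t\<bar> \<le> K" "\<And>t. A t + lam * X (Suc t) = c"
  shows "(1 - lam) * (\<Sum>t. lam ^ t * (X t + A t)) = (1 - lam) * X 0 + c"
proof -
  have "(\<lambda>t. lam ^ t * X t) \<longlonglongrightarrow> 0"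
    using summable_discounted[OF assms(1-3)] by (rule summable_LIMSEQ_zero)
  then have "(\<lambda>t. lam ^ t * X t - lam ^ Suc t * X (Suc t)) sums (X 0)"
    using telescope_sums'[of "\<lambda>t. lam ^ t * X t" 0] by simp
  moreover note discounted_const_sums[OF assms(1,2), of c]
  ultimately have "(\<lambda>t. (lam ^ t * X t - lam ^ Suc t * X (Suc t)) + lam ^ t * c) sums (X 0 + c / (1 - lam))"
    by (rule sums_add)
  moreover have "lam ^ t * X t - lam ^ Suc t * X (Suc t) + lam ^ t * c = lam ^ t * (X t + A t)" for t
    using assms(4)[of t] by (auto simp: algebra_simps)
  ultimately have "(\<Sum>t. lam ^ t * (X t + A t)) = X 0 + c / (1 - lam)"
    by (simp add: sums_iff)
  then show ?thesis
    using assms by (simp add: field_simps)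
qed

lemma ex_scaled_convex_weight:
  fixes k a b v :: real
  assumes "0 \<le> k" "k * a \<le> v" "v \<le> k * b"
  shows "\<exists>p\<in>{0..1}. v = k * (p * b + (1 - p) * a)"
proof (cases "k * (b - a) = 0")
  case True
  then have "v = k * a"
    using assms by (auto simp: algebra_simps)
  then show ?thesis
    by (intro bexI[of _ 0]) auto
next
  case False
  define d where "d = k * (b - a)"
  have "0 \<le> d"
    using assms by (simp add: d_def algebra_simps)
  with False have pos: "0 < d"
    unfolding d_def by linarith
  define p where "p = (v - k * a) / d"
  have "k * (p * b + (1 - p) * a) = k * a + p * d"
    by (simp add: d_def algebra_simps)
  also have "p * d = v - k * a"
    using pos by (simp add: p_def)
  finally have "v = k * (p * b + (1 - p) * a)"
    by simp
  moreover have "p \<in> {0..1}"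
    using assms pos by (auto simp: p_def d_def field_simps)
  ultimately show ?thesis
    by blast
qed

lemma autocratic_first_round_bounds:
  fixes \<phi> :: "'a::finite \<times> 'b::finite \<Rightarrow> real"
  assumes additive: "\<And>x y. \<phi> (x, y) = \<phi>X x + \<phi>Y y" and "autocratic \<sigma>X \<phi> lam"
    and lam: "0 \<le> lam" "lam < 1" and \<phi>X_range: "\<And>x. a \<le> \<phi>X x" "\<And>x. \<phi>X x \<le> b"
  shows "lam * a \<le> - (1 - lam) * measure_pmf.expectation (\<sigma>X []) \<phi>X - \<phi>Y y"
    and "- (1 - lam) * measure_pmf.expectation (\<sigma>X []) \<phi>X - \<phi>Y y \<le> lam * b"
proof -
  define u where "u = stage_exp \<sigma>X (\<lambda>_. return_pmf y) \<phi>"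
  have u_eq: "u t = hist_exp \<sigma>X (\<lambda>_. return_pmf y) t (\<lambda>h. measure_pmf.expectation (\<sigma>X h) \<phi>X + \<phi>Y y)"
    for t
    unfolding u_def stage_exp_additive[where \<phi>X = \<phi>X and \<phi>Y = \<phi>Y, OF additive] by simp
  have stage_bounds: "a + \<phi>Y y \<le> u (Suc t) \<and> u (Suc t) \<le> b + \<phi>Y y" for t
    unfolding u_eq using expectation_bounds[where f = \<phi>X, OF \<phi>X_range] by (intro hist_exp_bounds) simp
  note tail = discounted_sum_bounds[OF lam, of "a + \<phi>Y y" "\<lambda>t. u (Suc t)" "b + \<phi>Y y",
      OF conjunct1[OF stage_bounds] conjunct2[OF stage_bounds]]
  define T where "T = (1 - lam) * (\<Sum>t. lam ^ t * u (Suc t))"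
  have "0 = (1 - lam) * (\<Sum>t. lam ^ t * u t)"
    using assms(2) unfolding autocratic_def disc_payoff_def u_def by metis
  also have "\<dots> = (1 - lam) * u 0 + lam * T"
    unfolding discounted_sum_split_head[OF tail(1)] T_def by (simp add: algebra_simps)
  also have "u 0 = measure_pmf.expectation (\<sigma>X []) \<phi>X + \<phi>Y y"
    unfolding u_eq hist_exp_0 ..
  finally have payoff: "0 = (1 - lam) * (measure_pmf.expectation (\<sigma>X []) \<phi>X + \<phi>Y y) + lam * T" .
  have "lam * (a + \<phi>Y y) \<le> lam * T" "lam * T \<le> lam * (b + \<phi>Y y)"
    using tail(2,3) lam(1) unfolding T_def by (auto intro: mult_left_mono)
  with payoff show "lam * a \<le> - (1 - lam) * measure_pmf.expectation (\<sigma>X []) \<phi>X - \<phi>Y y"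
    and "- (1 - lam) * measure_pmf.expectation (\<sigma>X []) \<phi>X - \<phi>Y y \<le> lam * b"
    by (simp_all add: algebra_simps)
qed

lemma two_point_reactive_autocratic:
  fixes \<phi> :: "'a::finite \<times> 'b::finite \<Rightarrow> real" and tp tm :: "'a pmf"
  assumes additive: "\<And>x y. \<phi> (x, y) = \<phi>X x + \<phi>Y y" and lam: "0 \<le> lam" "lam < 1"
    and p0: "p0 \<in> {0..1}" and pstar: "\<And>y. pstar y \<in> {0..1}"
    and continuation: "\<And>y. c - \<phi>Y y = lam * (pstar y * measure_pmf.expectation tp \<phi>X
                                               + (1 - pstar y) * measure_pmf.expectation tm \<phi>X)"
    and start: "(1 - lam) * (p0 * measure_pmf.expectation tp \<phi>X
                               + (1 - p0) * measure_pmf.expectation tm \<phi>X) = - c"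
  shows "autocratic (two_point_reactive tp tm p0 pstar) \<phi> lam"
  unfolding autocratic_def
proof
  fix \<sigma>Y :: "('a, 'b) history \<Rightarrow> 'b pmf"
  define \<sigma>X where "\<sigma>X = two_point_reactive tp tm p0 pstar"
  define e where "e p = p * measure_pmf.expectation tp \<phi>X + (1 - p) * measure_pmf.expectation tm \<phi>X"
    for p
  have expectation_\<sigma>X: "measure_pmf.expectation (\<sigma>X h) \<phi>X =
                            (if h = [] then e p0 else e (pstar (snd (last h))))" for h
    using p0 pstar by (simp add: \<sigma>X_def two_point_reactive_def e_def expectation_mix_pmf)
  define X where "X t = hist_exp \<sigma>X \<sigma>Y t (\<lambda>h. measure_pmf.expectation (\<sigma>X h) \<phi>X)" for t
  define A where "A t = hist_exp \<sigma>X \<sigma>Y t (\<lambda>h. measure_pmf.expectation (\<sigma>Y h) \<phi>Y)" for t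
  have stage: "stage_exp \<sigma>X \<sigma>Y \<phi> t = X t + A t" for t
    unfolding stage_exp_additive[where \<phi>X = \<phi>X and \<phi>Y = \<phi>Y, OF additive] X_def A_def
    using hist_exp_add_scaled[where k = 1] by simp
  have X_Suc: "X (Suc t) = hist_exp \<sigma>X \<sigma>Y t (\<lambda>h. measure_pmf.expectation (\<sigma>Y h) (\<lambda>y. e (pstar y)))"
    for t
  proof -
    have "X (Suc t) = hist_exp \<sigma>X \<sigma>Y (Suc t) (\<lambda>h. e (pstar (snd (last h))))"
      unfolding X_def by (rule hist_exp_cong) (auto simp: expectation_\<sigma>X)
    also have "\<dots> = hist_exp \<sigma>X \<sigma>Y t (\<lambda>h. measure_pmf.expectation (\<sigma>Y h) (\<lambda>y. e (pstar y)))"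
      by (rule hist_exp_Suc_snd_last)
    finally show ?thesis .
  qed
  have continuation_e: "\<phi>Y y + lam * e (pstar y) = c" for y
    using continuation[of y] unfolding e_def by linarith
  have "A t + lam * X (Suc t) = c" for t
  proof -
    have "A t + lam * X (Suc t) =
            hist_exp \<sigma>X \<sigma>Y t (\<lambda>h. measure_pmf.expectation (\<sigma>Y h) (\<lambda>y. \<phi>Y y + lam * e (pstar y)))"
      unfolding A_def X_Suc hist_exp_add_scaled[symmetric] by (simp add: expectation_add_scaled)
    also have "\<dots> = c"
      by (simp add: continuation_e hist_exp_const)
    finally show ?thesis .
  qed
  moreover have "\<bar>X t\<bar> \<le> (\<Sum>x\<in>UNIV. \<bar>\<phi>X x\<bar>)" for t
  proof -
    define K where "K = (\<Sum>x\<in>UNIV. \<bar>\<phi>X x\<bar>)"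
    have abs_bound: "\<bar>\<phi>X x\<bar> \<le> K" for x
      unfolding K_def by (rule member_le_sum) auto
    have \<phi>X_bounds: "- K \<le> \<phi>X x" "\<phi>X x \<le> K" for x
      using abs_bound[of x] by arith+
    have "- K \<le> X t \<and> X t \<le> K"
      unfolding X_def using expectation_bounds[where f = \<phi>X, OF \<phi>X_bounds]
      by (intro hist_exp_bounds) auto
    then show ?thesis
      unfolding K_def by (simp add: abs_le_iff)
  qed
  ultimately have "(1 - lam) * (\<Sum>t. lam ^ t * (X t + A t)) = (1 - lam) * X 0 + c"
    by (intro discounted_sum_telescope[OF lam]) auto
  moreover have "X 0 = e p0"
    by (simp add: X_def hist_exp_0 expectation_\<sigma>X)
  ultimately show "disc_payoff \<sigma>X \<sigma>Y \<phi> lam = 0"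
    using start by (simp add: disc_payoff_def stage e_def)
qed

theorem corollary2:
  fixes \<phi> :: "'a::finite \<times> 'b::finite \<Rightarrow> real" and lam :: real
  assumes "0 \<le> lam" and "lam < 1" and "additive \<phi>" and "enforceable \<phi> lam"
  shows "\<exists>(tp :: 'a pmf) (tm :: 'a pmf) (p0 :: real) (pstar :: 'b \<Rightarrow> real).
           p0 \<in> {0..1} \<and> (\<forall>sY. pstar sY \<in> {0..1}) \<and>
           autocratic (two_point_reactive tp tm p0 pstar) \<phi> lam"
proof -
  note lam = assms(1,2)
  obtain \<phi>X \<phi>Y where additive: "\<And>x y. \<phi> (x, y) = \<phi>X x + \<phi>Y y"
    using assms(3) unfolding additive_def by blast
  obtain \<sigma>X where autocratic: "autocratic \<sigma>X \<phi> lam"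
    using assms(4) unfolding enforceable_def by blast
  obtain xmin xmax where \<phi>X_range: "\<And>x. \<phi>X xmin \<le> \<phi>X x" "\<And>x. \<phi>X x \<le> \<phi>X xmax"
    using ex_is_arg_min_if_finite[of UNIV \<phi>X] ex_is_arg_min_if_finite[of UNIV "\<lambda>x. - \<phi>X x"]
    by (auto simp: is_arg_min_linorder)
  define e0 where "e0 = measure_pmf.expectation (\<sigma>X []) \<phi>X"
  obtain pstar where pstar: "\<And>y. pstar y \<in> {0..1}" and continuation:
      "\<And>y. - (1 - lam) * e0 - \<phi>Y y = lam * (pstar y * \<phi>X xmax + (1 - pstar y) * \<phi>X xmin)"
    using ex_scaled_convex_weight[OF lam(1)
        autocratic_first_round_bounds[OF additive autocratic lam \<phi>X_range]]
    unfolding e0_def by metis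
  obtain p0 where p0: "p0 \<in> {0..1}" and start: "e0 = p0 * \<phi>X xmax + (1 - p0) * \<phi>X xmin"
    using ex_scaled_convex_weight[of 1 "\<phi>X xmin" e0 "\<phi>X xmax"]
      expectation_bounds[where p = "\<sigma>X []" and f = \<phi>X, OF \<phi>X_range, folded e0_def]
    by auto
  have "autocratic (two_point_reactive (return_pmf xmax) (return_pmf xmin) p0 pstar) \<phi> lam"
    by (rule two_point_reactive_autocratic[where \<phi>X = \<phi>X and \<phi>Y = \<phi>Y and c = "- (1 - lam) * e0",
          OF additive lam p0 pstar])
      (unfold expectation_return_pmf, fact continuation, simp add: start algebra_simps)
  with p0 pstar show ?thesis
    by blast
qed

end
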